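(* For every finite metric space $(X,d)$, every $S\subseteq X$, every $p\in(0,1)$ and every $\tau>0$, there exists a $1$-Lipschitz map $\varphi:X\to L_2$ such that for every $x,y\in S$ with $d(x,y)\ge\tau$, $$\|\varphi(x)-\varphi(y)\|_2\ge \frac{\tau\sqrt p}{\zeta(S;p)}.$$
   Context: $L_2$ denotes a Hilbert space. For a finite metric space $(Y,d)$ (here $S$ with the restricted metric), given $\Delta,\zeta>0$ and $p\in(0,1)$, $Y$ admits a random zero set at scale $\Delta$ which is $\zeta$-spreading with probability $p$ if there is a probability distribution $\mu$ over subsets $Z\subseteq Y$ such that for all $x,y\in Y$ with $d(x,y)\ge\Delta$, $\mu\{Z: y\in Z\text{ and } d(x,Z)\ge\Delta/\zeta\}\ge p$. $\zeta(Y;p)$ is the least $\zeta>0$ such that for every $\Delta>0$, $Y$ admits a random zero set at scale $\Delta$ which is $\zeta$-spreading with probability $p$. *)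

theory Defs
  imports "HOL-Analysis.Analysis" "HOL-Probability.Probability_Mass_Function"
begin

definition finite_metric_space :: "'a set \<Rightarrow> ('a \<Rightarrow> 'a \<Rightarrow> real) \<Rightarrow> bool" where
  "finite_metric_space X d \<longleftrightarrow> finite X \<and>
     (\<forall>x\<in>X. \<forall>y\<in>X. d x y \<ge> 0 \<and> (d x y = 0 \<longleftrightarrow> x = y) \<and> d x y = d y x) \<and>
     (\<forall>x\<in>X. \<forall>y\<in>X. \<forall>z\<in>X. d x z \<le> d x y + d y z)"

definition set_dist :: "('a \<Rightarrow> 'a \<Rightarrow> real) \<Rightarrow> 'a \<Rightarrow> 'a set \<Rightarrow> real" where
  "set_dist d x Z = (INF z\<in>Z. d x z)"

definition spreading_zero_set ::
  "('a \<Rightarrow> 'a \<Rightarrow> real) \<Rightarrow> 'a set \<Rightarrow> real \<Rightarrow> real \<Rightarrow> real \<Rightarrow> 'a set pmf \<Rightarrow> bool" where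
  "spreading_zero_set d Y \<Delta> \<zeta> p \<mu> \<longleftrightarrow>
     set_pmf \<mu> \<subseteq> Pow Y \<and>
     (\<forall>x\<in>Y. \<forall>y\<in>Y. d x y \<ge> \<Delta> \<longrightarrow>
        measure_pmf.prob \<mu> {Z. y \<in> Z \<and> set_dist d x Z \<ge> \<Delta> / \<zeta>} \<ge> p)"

text \<open>zeta(Y;p): least zeta > 0 admitting such random zero sets at every scale;
  valued in ereal, equal to \<infinity> when no such zeta exists.\<close>
definition zeta_spread :: "('a \<Rightarrow> 'a \<Rightarrow> real) \<Rightarrow> 'a set \<Rightarrow> real \<Rightarrow> ereal" where
  "zeta_spread d Y p = Inf (ereal ` {\<zeta>. \<zeta> > 0 \<and>
      (\<forall>\<Delta>>0. \<exists>\<mu>. spreading_zero_set d Y \<Delta> \<zeta> p \<mu>)})"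

end

theory Submission
  imports Defs
begin

text \<open>Given a random zero set \<mu> at scale \<tau> that is \<zeta>-spreading with probability p, map x
  to the vector with coordinates \<surd>\<mu>(Z) \<cdot> d(x,Z), one for each Z. Each coordinate
  x \<mapsto> d(x,Z) is 1-Lipschitz and \<mu> is a probability, so the map is 1-Lipschitz. If
  d(x,y) \<ge> \<tau>, then with probability at least p we have d(y,Z) = 0 and d(x,Z) \<ge> \<tau>/\<zeta>,
  whence \<parallel>\<phi>(x) - \<phi>(y)\<parallel> \<ge> \<tau> \<surd>p / \<zeta>. Since S is finite, the distances d(x,Z) take only
  finitely many values, so a \<zeta> close enough to the infimum \<zeta>(S;p) produces the same events:
  the infimum itself is admissible at every scale.\<close>

lemma finite_metric_space_finite: "finite_metric_space X d \<Longrightarrow> finite X"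
  unfolding finite_metric_space_def by blast

lemma set_dist_le:
  assumes "finite Z" "z \<in> Z"
  shows "set_dist d x Z \<le> d x z"
  using assms unfolding set_dist_def by (intro cINF_lower) (auto intro: bdd_below_finite)

lemma set_dist_greatest:
  assumes "Z \<noteq> {}" "\<And>z. z \<in> Z \<Longrightarrow> c \<le> d x z"
  shows "c \<le> set_dist d x Z"
  using assms unfolding set_dist_def by (intro cINF_greatest) auto

lemma set_dist_self:
  assumes "finite_metric_space X d" "Z \<subseteq> X" "y \<in> Z"
  shows "set_dist d y Z = 0"
proof (rule antisym)
  have "finite Z"
    using assms finite_metric_space_finite finite_subset by blast
  then have "set_dist d y Z \<le> d y y"
    using set_dist_le assms(3) by metis
  moreover have "d y y = 0"
    using assms unfolding finite_metric_space_def by blast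
  ultimately show "set_dist d y Z \<le> 0"
    by simp
  show "0 \<le> set_dist d y Z"
    using assms by (intro set_dist_greatest) (auto simp: finite_metric_space_def subset_iff)
qed

lemma set_dist_le_add:
  assumes "finite_metric_space X d" "Z \<subseteq> X" "x \<in> X" "y \<in> X"
  shows "set_dist d x Z \<le> d x y + set_dist d y Z"
proof (cases "Z = {}")
  case True
  then show ?thesis
    using assms by (simp add: finite_metric_space_def set_dist_def)
next
  case False
  have "finite Z"
    using assms finite_metric_space_finite finite_subset by blast
  have "set_dist d x Z - d x y \<le> set_dist d y Z"
  proof (rule set_dist_greatest[OF False])
    fix z
    assume "z \<in> Z"
    then have "set_dist d x Z \<le> d x z"
      using set_dist_le \<open>finite Z\<close> by metis
    also have "\<dots> \<le> d x y + d y z"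
      using assms \<open>z \<in> Z\<close> unfolding finite_metric_space_def by blast
    finally show "set_dist d x Z - d x y \<le> d y z"
      by simp
  qed
  then show ?thesis
    by simp
qed

lemma set_dist_lipschitz:
  assumes "finite_metric_space X d" "Z \<subseteq> X" "x \<in> X" "y \<in> X"
  shows "\<bar>set_dist d x Z - set_dist d y Z\<bar> \<le> d x y"
  using set_dist_le_add[OF assms] set_dist_le_add[OF assms(1,2,4,3)] assms
  unfolding finite_metric_space_def by auto

lemma ex_coordinates_L2_set_eq_weighted_sum:
  fixes w :: "'i \<Rightarrow> real" and f :: "'a \<Rightarrow> 'i \<Rightarrow> real"
  assumes "finite I" "\<And>i. i \<in> I \<Longrightarrow> 0 \<le> w i"
  shows "\<exists>(n::nat) (\<phi>::'a \<Rightarrow> nat \<Rightarrow> real). \<forall>x y.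
           L2_set (\<lambda>k. \<phi> x k - \<phi> y k) {..<n} = sqrt (\<Sum>i\<in>I. w i * (f x i - f y i)\<^sup>2)"
proof -
  obtain h where h: "bij_betw h {..<card I} I"
    using ex_bij_betw_nat_finite[OF assms(1)] by (auto simp: atLeast0LessThan)
  define \<phi> where "\<phi> x k = sqrt (w (h k)) * f x (h k)" for x k
  have "L2_set (\<lambda>k. \<phi> x k - \<phi> y k) {..<card I} = sqrt (\<Sum>i\<in>I. w i * (f x i - f y i)\<^sup>2)"
    for x y
  proof -
    have "L2_set (\<lambda>k. \<phi> x k - \<phi> y k) {..<card I}
        = sqrt (\<Sum>k<card I. w (h k) * (f x (h k) - f y (h k))\<^sup>2)"
      unfolding L2_set_def \<phi>_def using h assms(2)
      by (intro arg_cong[where f = sqrt] sum.cong)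
        (auto simp: bij_betw_def power_mult_distrib right_diff_distrib[symmetric])
    also have "\<dots> = sqrt (\<Sum>i\<in>I. w i * (f x i - f y i)\<^sup>2)"
      using sum.reindex_bij_betw[OF h, of "\<lambda>i. w i * (f x i - f y i)\<^sup>2"] by simp
    finally show ?thesis .
  qed
  then show ?thesis
    by blast
qed

lemma weighted_sum_squares_le:
  fixes w g :: "'i \<Rightarrow> real"
  assumes "finite I" "\<And>i. i \<in> I \<Longrightarrow> 0 \<le> w i" "sum w I \<le> 1"
    "\<And>i. i \<in> I \<Longrightarrow> \<bar>g i\<bar> \<le> D"
  shows "(\<Sum>i\<in>I. w i * (g i)\<^sup>2) \<le> D\<^sup>2"
proof -
  have "(\<Sum>i\<in>I. w i * (g i)\<^sup>2) \<le> (\<Sum>i\<in>I. w i * D\<^sup>2)"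
    using assms(2,4)
    by (intro sum_mono mult_left_mono) (metis abs_ge_zero order_trans power2_le_iff_abs_le)
  also have "\<dots> = D\<^sup>2 * sum w I"
    by (simp add: sum_distrib_right mult.commute)
  also have "\<dots> \<le> D\<^sup>2"
    using assms(3) mult_left_mono[of "sum w I" 1 "D\<^sup>2"] by simp
  finally show ?thesis .
qed

lemma weighted_sum_squares_ge:
  fixes w g :: "'i \<Rightarrow> real"
  assumes "finite I" "\<And>i. i \<in> I \<Longrightarrow> 0 \<le> w i" "F \<subseteq> I" "0 \<le> c"
    "\<And>i. i \<in> F \<Longrightarrow> c \<le> \<bar>g i\<bar>"
  shows "c\<^sup>2 * sum w F \<le> (\<Sum>i\<in>I. w i * (g i)\<^sup>2)"
proof -
  have "c\<^sup>2 * sum w F = (\<Sum>i\<in>F. w i * c\<^sup>2)"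
    by (simp add: sum_distrib_right mult.commute)
  also have "\<dots> \<le> (\<Sum>i\<in>F. w i * (g i)\<^sup>2)"
    using assms(2-5) by (intro sum_mono mult_left_mono) (auto simp: abs_le_square_iff[symmetric])
  also have "\<dots> \<le> (\<Sum>i\<in>I. w i * (g i)\<^sup>2)"
    using assms(1-3) by (intro sum_mono2) auto
  finally show ?thesis .
qed

lemma measure_pmf_eq_sum_pmf:
  assumes "finite A" "set_pmf \<mu> \<subseteq> A"
  shows "measure_pmf.prob \<mu> E = sum (pmf \<mu>) (E \<inter> A)"
proof -
  have "measure_pmf.prob \<mu> E = measure_pmf.prob \<mu> (E \<inter> A \<inter> set_pmf \<mu>)"
    using assms(2) measure_Int_set_pmf[of \<mu> E] by (simp add: Int_absorb1 Int_assoc)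
  also have "\<dots> = sum (pmf \<mu>) (E \<inter> A)"
    using assms(1) by (simp add: measure_Int_set_pmf measure_measure_pmf_finite)
  finally show ?thesis .
qed

lemma finite_gap_below:
  fixes V :: "real set"
  assumes "finite V" "0 < a"
  shows "\<exists>b. 0 < b \<and> b < a \<and> (\<forall>v\<in>V. b < v \<longrightarrow> a \<le> v)"
proof (intro exI conjI ballI impI)
  define b where "b = Max (insert (a / 2) {v \<in> V. v < a})"
  have fin: "finite (insert (a / 2) {v \<in> V. v < a})"
    using assms(1) by simp
  show "0 < b"
    using fin assms(2) unfolding b_def by (auto simp: Max_gr_iff)
  show "b < a"
    using fin assms(2) unfolding b_def by (auto simp: Max_less_iff)
  show "a \<le> v" if "v \<in> V" "b < v" for v
    using fin that Max_ge[OF fin, of v] unfolding b_def by force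
qed

lemma spreading_zero_set_embedding:
  assumes X: "finite_metric_space X d" and "S \<subseteq> X"
    and \<mu>: "spreading_zero_set d S \<Delta> \<zeta> p \<mu>" and "0 < \<Delta>" "0 < \<zeta>"
  shows "\<exists>(n::nat) (\<phi>::'a \<Rightarrow> nat \<Rightarrow> real).
           (\<forall>x\<in>X. \<forall>y\<in>X. L2_set (\<lambda>i. \<phi> x i - \<phi> y i) {..<n} \<le> d x y) \<and>
           (\<forall>x\<in>S. \<forall>y\<in>S. \<Delta> \<le> d x y \<longrightarrow> \<Delta> / \<zeta> * sqrt p \<le> L2_set (\<lambda>i. \<phi> x i - \<phi> y i) {..<n})"
proof -
  have "finite S"
    using assms finite_metric_space_finite finite_subset by blast
  have supp: "set_pmf \<mu> \<subseteq> Pow S"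
    using \<mu> unfolding spreading_zero_set_def by blast
  define sq_dist where
    "sq_dist x y = (\<Sum>Z\<in>Pow S. pmf \<mu> Z * (set_dist d x Z - set_dist d y Z)\<^sup>2)" for x y
  obtain n and \<phi> :: "'a \<Rightarrow> nat \<Rightarrow> real"
    where \<phi>: "\<And>x y. L2_set (\<lambda>i. \<phi> x i - \<phi> y i) {..<n} = sqrt (sq_dist x y)"
    using ex_coordinates_L2_set_eq_weighted_sum[of "Pow S" "pmf \<mu>" "\<lambda>x Z. set_dist d x Z"]
      \<open>finite S\<close> unfolding sq_dist_def by (metis finite_Pow_iff pmf_nonneg)
  have "sqrt (sq_dist x y) \<le> d x y" if "x \<in> X" "y \<in> X" for x y
  proof -
    have "sq_dist x y \<le> (d x y)\<^sup>2"
      unfolding sq_dist_def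
    proof (rule weighted_sum_squares_le)
      show "sum (pmf \<mu>) (Pow S) \<le> 1"
        using \<open>finite S\<close> supp sum_pmf_eq_1 by (metis finite_Pow_iff order_refl)
      show "\<bar>set_dist d x Z - set_dist d y Z\<bar> \<le> d x y" if "Z \<in> Pow S" for Z
        using set_dist_lipschitz[OF X] \<open>S \<subseteq> X\<close> \<open>x \<in> X\<close> \<open>y \<in> X\<close> that by blast
    qed (use \<open>finite S\<close> in auto)
    moreover have "0 \<le> d x y"
      using X that unfolding finite_metric_space_def by blast
    ultimately show ?thesis
      using real_le_lsqrt by blast
  qed
  moreover have "\<Delta> / \<zeta> * sqrt p \<le> sqrt (sq_dist x y)"
    if "x \<in> S" "y \<in> S" "\<Delta> \<le> d x y" for x y
  proof -
    define F where "F = {Z \<in> Pow S. y \<in> Z \<and> \<Delta> / \<zeta> \<le> set_dist d x Z}"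
    have "p \<le> measure_pmf.prob \<mu> {Z. y \<in> Z \<and> \<Delta> / \<zeta> \<le> set_dist d x Z}"
      using \<mu> that unfolding spreading_zero_set_def by blast
    also have "\<dots> = sum (pmf \<mu>) ({Z. y \<in> Z \<and> \<Delta> / \<zeta> \<le> set_dist d x Z} \<inter> Pow S)"
      using \<open>finite S\<close> by (intro measure_pmf_eq_sum_pmf[OF _ supp]) simp
    also have "{Z. y \<in> Z \<and> \<Delta> / \<zeta> \<le> set_dist d x Z} \<inter> Pow S = F"
      unfolding F_def by blast
    finally have "(\<Delta> / \<zeta>)\<^sup>2 * p \<le> (\<Delta> / \<zeta>)\<^sup>2 * sum (pmf \<mu>) F"
      by (simp add: mult_left_mono)
    also have "\<dots> \<le> sq_dist x y"
      unfolding sq_dist_def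
    proof (rule weighted_sum_squares_ge)
      show "\<Delta> / \<zeta> \<le> \<bar>set_dist d x Z - set_dist d y Z\<bar>" if "Z \<in> F" for Z
        using that set_dist_self[OF X, of Z y] \<open>S \<subseteq> X\<close> unfolding F_def by auto
    qed (use \<open>finite S\<close> \<open>0 < \<Delta>\<close> \<open>0 < \<zeta>\<close> in \<open>auto simp: F_def\<close>)
    finally have "sqrt ((\<Delta> / \<zeta>)\<^sup>2 * p) \<le> sqrt (sq_dist x y)"
      by (rule real_sqrt_le_mono)
    then show ?thesis
      using \<open>0 < \<Delta>\<close> \<open>0 < \<zeta>\<close> by (simp add: real_sqrt_mult)
  qed
  ultimately show ?thesis
    by (intro exI[of _ n] exI[of _ \<phi>]) (simp add: \<phi>)
qed

lemma spreading_zero_set_zeta_ge_1: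
  assumes "finite S" and \<mu>: "spreading_zero_set d S (d x y) \<zeta> p \<mu>"
    and "x \<in> S" "y \<in> S" "0 < d x y" "0 < \<zeta>" "0 < p"
  shows "1 \<le> \<zeta>"
proof -
  define E where "E = {Z. y \<in> Z \<and> d x y / \<zeta> \<le> set_dist d x Z}"
  have "0 < measure_pmf.prob \<mu> E"
    using \<mu> assms(3,4,7) unfolding spreading_zero_set_def E_def by fastforce
  then have "E \<inter> set_pmf \<mu> \<noteq> {}"
    by (metis measure_Int_set_pmf measure_empty less_irrefl)
  then obtain Z where "Z \<subseteq> S" "y \<in> Z" "d x y / \<zeta> \<le> set_dist d x Z"
    using \<mu> unfolding spreading_zero_set_def E_def by blast
  moreover have "set_dist d x Z \<le> d x y"
    using \<open>finite S\<close> \<open>Z \<subseteq> S\<close> \<open>y \<in> Z\<close> finite_subset set_dist_le by metis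
  ultimately have "d x y / \<zeta> \<le> d x y"
    by linarith
  then show ?thesis
    using \<open>0 < d x y\<close> \<open>0 < \<zeta>\<close> by (simp add: divide_le_eq)
qed

lemma one_le_zeta_spread:
  assumes "finite S" "x \<in> S" "y \<in> S" "0 < d x y" "0 < p"
  shows "1 \<le> zeta_spread d S p"
  unfolding zeta_spread_def
proof (rule Inf_greatest)
  fix r
  assume "r \<in> ereal ` {\<zeta>. 0 < \<zeta> \<and> (\<forall>\<Delta>>0. \<exists>\<mu>. spreading_zero_set d S \<Delta> \<zeta> p \<mu>)}"
  then obtain \<zeta> \<mu> where "r = ereal \<zeta>" "0 < \<zeta>" "spreading_zero_set d S (d x y) \<zeta> p \<mu>"
    using \<open>0 < d x y\<close> by blast
  then show "1 \<le> r"
    using spreading_zero_set_zeta_ge_1 assms by simp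
qed

lemma spreading_zero_set_zeta_spread:
  assumes "finite S" "zeta_spread d S p = ereal z" "0 < z" "0 < \<Delta>"
  shows "\<exists>\<mu>. spreading_zero_set d S \<Delta> z p \<mu>"
proof -
  have finite_values: "finite ((\<lambda>(x, Z). set_dist d x Z) ` (S \<times> Pow S))"
    using assms(1) by simp
  have "0 < \<Delta> / z"
    using assms(3,4) by simp
  obtain b where "0 < b" "b < \<Delta> / z"
    and gap_values: "\<And>v. v \<in> (\<lambda>(x, Z). set_dist d x Z) ` (S \<times> Pow S) \<Longrightarrow> b < v \<Longrightarrow> \<Delta> / z \<le> v"
    using finite_gap_below[OF finite_values \<open>0 < \<Delta> / z\<close>] by blast
  have gap: "\<Delta> / z \<le> set_dist d x Z" if "x \<in> S" "Z \<subseteq> S" "b < set_dist d x Z" for x Z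
    using that by (intro gap_values[OF rev_image_eqI[of "(x, Z)"]]) simp_all
  have "z < \<Delta> / b"
    using \<open>0 < b\<close> \<open>b < \<Delta> / z\<close> \<open>0 < z\<close> by (simp add: field_simps)
  then have "zeta_spread d S p < ereal (\<Delta> / b)"
    using assms(2) by simp
  then obtain \<zeta> \<mu> where "0 < \<zeta>" "\<zeta> < \<Delta> / b" and \<mu>: "spreading_zero_set d S \<Delta> \<zeta> p \<mu>"
    using \<open>0 < \<Delta>\<close> unfolding zeta_spread_def by (auto simp: Inf_less_iff)
  have "b < \<Delta> / \<zeta>"
    using \<open>0 < b\<close> \<open>0 < \<zeta>\<close> \<open>\<zeta> < \<Delta> / b\<close> by (simp add: field_simps)
  have supp: "set_pmf \<mu> \<subseteq> Pow S"
    using \<mu> unfolding spreading_zero_set_def by blast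
  have "p \<le> measure_pmf.prob \<mu> {Z. y \<in> Z \<and> \<Delta> / z \<le> set_dist d x Z}"
    if "x \<in> S" "y \<in> S" "\<Delta> \<le> d x y" for x y
  proof -
    have "p \<le> measure_pmf.prob \<mu> {Z. y \<in> Z \<and> \<Delta> / \<zeta> \<le> set_dist d x Z}"
      using \<mu> that unfolding spreading_zero_set_def by blast
    also have "\<dots> = measure_pmf.prob \<mu> ({Z. y \<in> Z \<and> \<Delta> / \<zeta> \<le> set_dist d x Z} \<inter> set_pmf \<mu>)"
      by (simp add: measure_Int_set_pmf)
    also have "\<dots> \<le> measure_pmf.prob \<mu> {Z. y \<in> Z \<and> \<Delta> / z \<le> set_dist d x Z}"
    proof (rule measure_pmf.finite_measure_mono)
      show "{Z. y \<in> Z \<and> \<Delta> / \<zeta> \<le> set_dist d x Z} \<inter> set_pmf \<mu>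
            \<subseteq> {Z. y \<in> Z \<and> \<Delta> / z \<le> set_dist d x Z}"
      proof
        fix Z
        assume Z: "Z \<in> {Z. y \<in> Z \<and> \<Delta> / \<zeta> \<le> set_dist d x Z} \<inter> set_pmf \<mu>"
        then have "Z \<subseteq> S" "b < set_dist d x Z"
          using supp \<open>b < \<Delta> / \<zeta>\<close> by auto
        then show "Z \<in> {Z. y \<in> Z \<and> \<Delta> / z \<le> set_dist d x Z}"
          using Z gap[OF \<open>x \<in> S\<close>] by blast
      qed
    qed simp
    finally show ?thesis .
  qed
  then show ?thesis
    using supp unfolding spreading_zero_set_def by blast
qed

theorem lemma3p5:
  fixes X S :: "'a set" and d :: "'a \<Rightarrow> 'a \<Rightarrow> real" and p \<tau> :: real
  assumes "finite_metric_space X d" and "S \<subseteq> X"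
    and "0 < p" and "p < 1" and "\<tau> > 0"
  shows "\<exists>(n::nat) (\<phi>::'a \<Rightarrow> nat \<Rightarrow> real).
           (\<forall>x\<in>X. \<forall>y\<in>X. L2_set (\<lambda>i. \<phi> x i - \<phi> y i) {..<n} \<le> d x y) \<and>
           (\<forall>x\<in>S. \<forall>y\<in>S. d x y \<ge> \<tau> \<longrightarrow>
              ereal (\<tau> * sqrt p) / zeta_spread d S p
                \<le> ereal (L2_set (\<lambda>i. \<phi> x i - \<phi> y i) {..<n}))"
proof -
  have "finite S"
    using assms(1,2) finite_metric_space_finite finite_subset by blast
  have trivial: ?thesis
    if "\<forall>x\<in>S. \<forall>y\<in>S. \<tau> \<le> d x y \<longrightarrow> ereal (\<tau> * sqrt p) / zeta_spread d S p \<le> 0"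
    using that assms(1) unfolding finite_metric_space_def
    by (intro exI[of _ 0]) (simp add: zero_ereal_def)
  show ?thesis
  proof (cases "zeta_spread d S p")
    case (real z)
    show ?thesis
    proof (cases "0 < z")
      case True
      obtain \<mu> where "spreading_zero_set d S \<tau> z p \<mu>"
        using spreading_zero_set_zeta_spread \<open>finite S\<close> real True assms(5) by blast
      then show ?thesis
        using spreading_zero_set_embedding[OF assms(1,2)] real True assms(5)
        by (simp add: mult.commute)
    next
      case False
      have "\<not> \<tau> \<le> d x y" if "x \<in> S" "y \<in> S" for x y
      proof
        assume "\<tau> \<le> d x y"
        then have "1 \<le> zeta_spread d S p"
          using one_le_zeta_spread[of S x y d p] \<open>finite S\<close> that assms(3,5) by simp
        then show False
          using real False by simp
      qed
      then show ?thesis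
        using trivial by blast
    qed
  qed (use trivial in simp_all) \<comment> \<open>division by \<plusminus>\<infinity> gives 0 in ereal\<close>
qed

end
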